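(* Assume $(\boldsymbol\lambda,\boldsymbol\mu)$ satisfies (H) (notation as there) and that there exists a good sequence $v_{\omega.\mu}=v_{\mathbf k_0}\overset{\bullet}{\to}\cdots\overset{\bullet}{\to}v_{\mathbf k_e}\overset{t}{\to}v_{\mathbf k_{e+1}}\overset{\bullet}{\to}\cdots\overset{\bullet}{\to}v_{\mathbf k_N}=v_\lambda$ with respect to $(\lambda,\mu)$, where $t\in\{2,3,4\}$ is the index of the rule used at the unique step with $m=1$. Then this good sequence is unique, $t$ is uniquely determined, $(\gamma,\delta)\neq(0,0)$, and $h\equiv\eta\pmod{nl}$ for some $\eta\in\{0,\gamma,\delta,\gamma+\delta\}$.
   Context: Fix $n,l,m\ge1$, $\mathbf s_l=(s_1,\dots,s_l)\in\mathbb Z^l$, $s=\sum s_b$. Each $k\in\mathbb Z$ is uniquely $k=c(k)+n(d(k)-1)+nl\,m(k)$, $c(k)\in\{1..n\}$, $d(k)\in\{1..l\}$; $\phi(k)=c(k)+n\,m(k)$. $\Pi^l_m$ = $l$-tuples of partitions of total size $m$; $\boldsymbol\lambda\leftrightarrow\lambda$ iff $\{(\lambda^{(b)}_i+s_b+1-i,b)\}=\{(\phi(k),d(k)):k\in\{\lambda_i+s+1-i:i\ge1\}\}$; $\boldsymbol\lambda\prec\boldsymbol\mu$ iff $\lambda\lhd\mu$ (strict dominance). For $|\lambda|=r$, $\boldsymbol\beta(\lambda)=(\lambda_i+s+1-i)_{i\le r}$, $B(\lambda)$ its set. (H): $\boldsymbol\lambda,\boldsymbol\mu\in\Pi^l_m$,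 $\boldsymbol\lambda\leftrightarrow\lambda$, $\boldsymbol\mu\leftrightarrow\mu$, $\boldsymbol\lambda\prec\boldsymbol\mu$, $|\lambda|=|\mu|=r$, $\#(B(\lambda)\cap B(\mu))=r-2$. Under (H): $\boldsymbol\beta(\mu)=(\beta_i)$; $\lambda/(\lambda\cap\mu)$, $\mu/(\lambda\cap\mu)$ are ribbons of a common length $h$; $x$ is the row of the head of $\lambda/(\lambda\cap\mu)$, $y$ the row of the tail of $\mu/(\lambda\cap\mu)$; $B(\lambda)=(B(\mu)\setminus\{\beta_x,\beta_y\})\cup\{\beta_x+h,\beta_y-h\}$; $\gamma,\delta\in\{0..nl-1\}$ are the residues mod $nl$ of $c(\beta_y)-c(\beta_x)$ and $n(d(\beta_y)-d(\beta_x))$. Wedge space (Uglov): $\mathbb C(q)$-span of $v_{k_1}\wedge v_{k_2}\wedge\cdots$ ($k_i=s+1-i$ for $i\gg0$) with basis the ordered symbols; an adjacent pair $v_{k_1}\wedge v_{k_2}$, $k_1\le k_2$, is straightened by (with $\gamma',\delta'$ the residues mod $nl$ of $c(k_2)-c(k_1)$, $n(d(k_2)-d(k_1))$; sums over $i$ giving ordered two-factor wedges): (R1) $\gamma'=\delta'=0$: $v_{k_1}\wedge v_{k_2}=-v_{k_2}\wedge v_{k_1}$. (R2) $\gamma'>0,\delta'=0$: $=-q^{-1}v_{k_2}\wedge v_{k_1}-(q^{-2}-1)\sum_{i\ge1}q^{-2i+1}v_{k_2-nli}\wedge v_{k_1+nli}+(q^{-2}-1)\sum_{i\ge0}q^{-2i}v_{k_2-\gamma'-nli}\wedge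 v_{k_1+\gamma'+nli}$. (R3) $\gamma'=0,\delta'>0$: $=-qv_{k_2}\wedge v_{k_1}-(q^2-1)\sum_{i\ge1}q^{2i-1}v_{k_2-nli}\wedge v_{k_1+nli}+(q^2-1)\sum_{i\ge0}q^{2i}v_{k_2-\delta'-nli}\wedge v_{k_1+\delta'+nli}$. (R4) $\gamma',\delta'>0$: $=-v_{k_2}\wedge v_{k_1}-(q-q^{-1})\sum_{i\ge1}\frac{q^{2i}-q^{-2i}}{q+q^{-1}}v_{k_2-nli}\wedge v_{k_1+nli}-(q-q^{-1})\sum_{i\ge0}\frac{q^{2i+1}+q^{-2i-1}}{q+q^{-1}}v_{k_2-\gamma'-nli}\wedge v_{k_1+\gamma'+nli}+(q-q^{-1})\sum_{i\ge0}\frac{q^{2i+1}+q^{-2i-1}}{q+q^{-1}}v_{k_2-\delta'-nli}\wedge v_{k_1+\delta'+nli}+(q-q^{-1})\sum_{i\ge0}\frac{q^{2i+2}-q^{-2i-2}}{q+q^{-1}}v_{k_2-\gamma'-\delta'-nli}\wedge v_{k_1+\gamma'+\delta'+nli}$. Sequences: wedges $v_{\mathbf k}$ with first $r$ indices $\mathbf k$ and fixed tail $s-r,s-r-1,\dots$; $\sigma.(k_1,\dots,k_r)=(k_{\sigma^{-1}(1)},\dots)$; $\omega$ longest element; $v_\lambda=v_{\boldsymbol\beta(\lambda)}$, $v_{\omega.\mu}=v_{\omega.\boldsymbol\beta(\mu)}$. $v_{\mathbf k}\to v_{\mathbf l}$ if there is $i$ with $k_i\le k_{i+1}$, $k_j>k_{j+1}$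 for $j<i$, $k_j=l_j$ for $j\notin\{i,i+1\}$, and $v_{l_i}\wedge v_{l_{i+1}}$ has nonzero coefficient in the straightening of $v_{k_i}\wedge v_{k_{i+1}}$ by the applicable rule $(R_t)$; written $\overset{\bullet}{\to}$ (with $m=0$) if $(l_i,l_{i+1})=(k_{i+1},k_i)$, else $\overset{t}{\to}$ (with $m=1$). A good sequence for $(\lambda,\mu)$ is a chain $v_{\omega.\mu}\to\cdots\to v_\lambda$ with total $m$ equal to $1$. *)

theory Defs
  imports "HOL-Computational_Algebra.Polynomial" "HOL-Computational_Algebra.Fraction_Field"
begin

section \<open>Decomposition of integers k = c(k) + n(d(k)-1) + nl m(k)\<close>

definition cc :: "nat \<Rightarrow> int \<Rightarrow> int" where
  "cc n k = (k - 1) mod int n + 1"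

definition dd :: "nat \<Rightarrow> nat \<Rightarrow> int \<Rightarrow> int" where
  "dd n l k = ((k - 1) div int n) mod int l + 1"

definition mm :: "nat \<Rightarrow> nat \<Rightarrow> int \<Rightarrow> int" where
  "mm n l k = (k - 1) div (int n * int l)"

definition phi :: "nat \<Rightarrow> nat \<Rightarrow> int \<Rightarrow> int" where
  "phi n l k = cc n k + int n * mm n l k"

definition is_partition :: "nat list \<Rightarrow> bool" where
  "is_partition p \<longleftrightarrow> sorted_wrt (\<ge>) p \<and> (\<forall>x\<in>set p. 0 < x)"

definition part :: "nat list \<Rightarrow> nat \<Rightarrow> nat" where
  "part p i = (if 1 \<le> i \<and> i \<le> length p then p ! (i - 1) else 0)"

definition psize :: "nat list \<Rightarrow> nat" where
  "psize p = sum_list p"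

definition multipartitions :: "nat \<Rightarrow> nat \<Rightarrow> nat list list set" where
  "multipartitions l m = {bl. length bl = l \<and> (\<forall>p\<in>set bl. is_partition p)
        \<and> sum_list (map psize bl) = m}"

definition dominates :: "nat list \<Rightarrow> nat list \<Rightarrow> bool" where
  "dominates lam mu \<longleftrightarrow> psize lam = psize mu \<and>
     (\<forall>k. (\<Sum>i=1..k. part lam i) \<le> (\<Sum>i=1..k. part mu i))"

definition strictly_dominated :: "nat list \<Rightarrow> nat list \<Rightarrow> bool" where
  "strictly_dominated lam mu \<longleftrightarrow> dominates lam mu \<and> lam \<noteq> mu"

definition corr :: "nat \<Rightarrow> nat \<Rightarrow> int list \<Rightarrow> nat list list \<Rightarrow> nat list \<Rightarrow> bool" where
  "corr n l sl bl lam \<longleftrightarrow> is_partition lam \<and>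
     {(int (part (bl ! (b - 1)) i) + sl ! (b - 1) + 1 - int i, int b) | i b.
         1 \<le> i \<and> 1 \<le> b \<and> b \<le> l}
   = {(phi n l k, dd n l k) | k.
         k \<in> {int (part lam i) + sum_list sl + 1 - int i | i. 1 \<le> i}}"

definition mp_prec :: "nat \<Rightarrow> nat \<Rightarrow> int list \<Rightarrow> nat list list \<Rightarrow> nat list list \<Rightarrow> bool" where
  "mp_prec n l sl bl bm \<longleftrightarrow> (\<exists>lam mu. corr n l sl bl lam \<and> corr n l sl bm mu
       \<and> strictly_dominated lam mu)"

definition beta :: "int \<Rightarrow> nat list \<Rightarrow> int list" where
  "beta s lam = map (\<lambda>i. int (part lam i) + s + 1 - int i) [1..<psize lam + 1]"

definition diagram :: "nat list \<Rightarrow> (nat \<times> nat) set" where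
  "diagram p = {(i, j). 1 \<le> i \<and> 1 \<le> j \<and> j \<le> part p i}"

definition skew :: "nat list \<Rightarrow> nat list \<Rightarrow> (nat \<times> nat) set" where
  "skew lam mu = diagram lam - diagram mu"

definition ribbon_len :: "nat list \<Rightarrow> nat list \<Rightarrow> nat" where
  "ribbon_len lam mu = card (skew lam mu)"

text \<open>row of the head (south-west end cell, i.e. lowest row) of a ribbon, and
  row of the tail (north-east end cell, i.e. highest row) of a ribbon\<close>
definition head_row :: "(nat \<times> nat) set \<Rightarrow> nat" where
  "head_row R = Max (fst ` R)"

definition tail_row :: "(nat \<times> nat) set \<Rightarrow> nat" where
  "tail_row R = Min (fst ` R)"

definition qq :: "complex poly fract" where
  "qq = Fract [:0, 1:] 1"

definition gam' :: "nat \<Rightarrow> nat \<Rightarrow> int \<Rightarrow> int \<Rightarrow> int" where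
  "gam' n l k1 k2 = (cc n k2 - cc n k1) mod (int n * int l)"

definition del' :: "nat \<Rightarrow> nat \<Rightarrow> int \<Rightarrow> int \<Rightarrow> int" where
  "del' n l k1 k2 = (int n * (dd n l k2 - dd n l k1)) mod (int n * int l)"

text \<open>index t of the rule (R_t) applicable to v_k1 wedge v_k2\<close>
definition rule_idx :: "nat \<Rightarrow> nat \<Rightarrow> int \<Rightarrow> int \<Rightarrow> nat" where
  "rule_idx n l k1 k2 =
     (if gam' n l k1 k2 = 0 \<and> del' n l k1 k2 = 0 then 1
      else if del' n l k1 k2 = 0 then 2
      else if gam' n l k1 k2 = 0 then 3 else 4)"

text \<open>coefficient of v_a wedge v_b contributed by a sum
  sum_{i >= lo} f(i) v_{k2 - sh - nli} wedge v_{k1 + sh + nli},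
  where only ordered wedges (first index > second index) occur\<close>
definition ssum :: "nat \<Rightarrow> nat \<Rightarrow> int \<Rightarrow> int \<Rightarrow> nat \<Rightarrow> int \<Rightarrow> (nat \<Rightarrow> complex poly fract)
                     \<Rightarrow> int \<Rightarrow> int \<Rightarrow> complex poly fract" where
  "ssum n l k1 k2 lo sh f a b =
     (\<Sum>i\<in>{i::nat. lo \<le> i \<and> a = k2 - sh - int n * int l * int i
                   \<and> b = k1 + sh + int n * int l * int i \<and> b < a}. f i)"

text \<open>coefficient of v_a wedge v_b in the straightening of v_k1 wedge v_k2 (k1 \<le> k2)\<close>
definition straight_coeff :: "nat \<Rightarrow> nat \<Rightarrow> int \<Rightarrow> int \<Rightarrow> int \<Rightarrow> int \<Rightarrow> complex poly fract" where
  "straight_coeff n l k1 k2 a b =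
    (let g = gam' n l k1 k2; dl = del' n l k1 k2; q = qq;
         lead = (if a = k2 \<and> b = k1 then 1 else 0);
         S = (\<lambda>lo sh f. ssum n l k1 k2 lo sh f a b) in
     if rule_idx n l k1 k2 = 1 then - lead
     else if rule_idx n l k1 k2 = 2 then
       - inverse q * lead
       - (q powi (-2) - 1) * S 1 0 (\<lambda>i. q powi (- 2 * int i + 1))
       + (q powi (-2) - 1) * S 0 g (\<lambda>i. q powi (- 2 * int i))
     else if rule_idx n l k1 k2 = 3 then
       - q * lead
       - (q ^ 2 - 1) * S 1 0 (\<lambda>i. q powi (2 * int i - 1))
       + (q ^ 2 - 1) * S 0 dl (\<lambda>i. q powi (2 * int i))
     else
       - lead
       - (q - inverse q) * S 1 0
            (\<lambda>i. (q powi (2 * int i) - q powi (- 2 * int i)) / (q + inverse q))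
       - (q - inverse q) * S 0 g
            (\<lambda>i. (q powi (2 * int i + 1) + q powi (- 2 * int i - 1)) / (q + inverse q))
       + (q - inverse q) * S 0 dl
            (\<lambda>i. (q powi (2 * int i + 1) + q powi (- 2 * int i - 1)) / (q + inverse q))
       + (q - inverse q) * S 0 (g + dl)
            (\<lambda>i. (q powi (2 * int i + 2) - q powi (- 2 * int i - 2)) / (q + inverse q)))"

section \<open>Sequences of wedges (first r indices; the tail s-r, s-r-1, ... is fixed)\<close>

definition first_nondesc :: "int list \<Rightarrow> nat" where
  "first_nondesc kk = (LEAST i. kk ! i \<le> kk ! Suc i)"

definition wstep :: "nat \<Rightarrow> nat \<Rightarrow> int list \<Rightarrow> int list \<Rightarrow> bool" where
  "wstep n l kk ll \<longleftrightarrow> (\<exists>i. Suc i < length kk \<and> length ll = length kk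
      \<and> kk ! i \<le> kk ! Suc i \<and> (\<forall>j<i. kk ! Suc j < kk ! j)
      \<and> (\<forall>j<length kk. j \<noteq> i \<and> j \<noteq> Suc i \<longrightarrow> ll ! j = kk ! j)
      \<and> straight_coeff n l (kk ! i) (kk ! Suc i) (ll ! i) (ll ! Suc i) \<noteq> 0)"

text \<open>label of a step: 0 for a bullet step (m = 0), otherwise the index t of the rule (m = 1)\<close>
definition step_label :: "nat \<Rightarrow> nat \<Rightarrow> int list \<Rightarrow> int list \<Rightarrow> nat" where
  "step_label n l kk ll =
     (let i = first_nondesc kk in
      if ll ! i = kk ! Suc i \<and> ll ! Suc i = kk ! i then 0
      else rule_idx n l (kk ! i) (kk ! Suc i))"

text \<open>good sequence v_{omega.mu} \<rightarrow> ... \<rightarrow> v_lam with total m equal to 1\<close>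
definition good_seq :: "nat \<Rightarrow> nat \<Rightarrow> int \<Rightarrow> nat list \<Rightarrow> nat list \<Rightarrow> int list list \<Rightarrow> bool" where
  "good_seq n l s lam mu ks \<longleftrightarrow> ks \<noteq> [] \<and> hd ks = rev (beta s mu) \<and> last ks = beta s lam
     \<and> (\<forall>j. Suc j < length ks \<longrightarrow> wstep n l (ks ! j) (ks ! Suc j))
     \<and> card {j. Suc j < length ks \<and> step_label n l (ks ! j) (ks ! Suc j) \<noteq> 0} = 1"

end

theory Submission
  imports Defs
begin

text \<open>Away from its labelled step a good sequence consists of bubble steps, which only
  permute the entries of a wedge. Hence the labelled step replaces the adjacent pair
  \<open>k\<^sub>1 < k\<^sub>2\<close> at the first non-descent by a non-leading term \<open>v\<^sub>a \<and> v\<^sub>b\<close> of its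
  straightening, and \<open>{k\<^sub>1, k\<^sub>2} = \<beta>(\<mu>) - \<beta>(\<lambda>)\<close>, \<open>{a, b} = \<beta>(\<lambda>) - \<beta>(\<mu>)\<close>.
  Non-leading terms exist only for rules (R2)--(R4), i.e. \<open>(\<gamma>', \<delta>') \<noteq> (0, 0)\<close>, and
  satisfy \<open>b - k\<^sub>1 \<equiv> \<eta> (mod nl)\<close> with \<open>\<eta> \<in> {0, \<gamma>', \<delta>', \<gamma>' + \<delta>'}\<close>. Counting
  \<beta>-numbers shows that \<open>k\<^sub>1 = \<beta>\<^sub>x\<close>, \<open>k\<^sub>2 = \<beta>\<^sub>y\<close> and \<open>h = b - k\<^sub>1\<close>.
  For uniqueness, bubble steps are deterministic and never undo an inversion, so the
  labelled step happens exactly when \<open>k\<^sub>1, k\<^sub>2\<close> first meet at the first non-descent,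
  and the sequence is determined before and after it.\<close>

section \<open>Steps between wedges\<close>

definition swap_adj :: "int list \<Rightarrow> nat \<Rightarrow> int list" where
  "swap_adj kk i = kk[i := kk ! Suc i, Suc i := kk ! i]"

definition bubble :: "int list \<Rightarrow> int list" where
  "bubble kk = swap_adj kk (first_nondesc kk)"

lemma length_swap_adj [simp]: "length (swap_adj kk i) = length kk"
  unfolding swap_adj_def by simp

lemma set_swap_adj: "Suc i < length kk \<Longrightarrow> set (swap_adj kk i) = set kk"
  unfolding swap_adj_def by simp

lemma distinct_swap_adj: "Suc i < length kk \<Longrightarrow> distinct (swap_adj kk i) = distinct kk"
  unfolding swap_adj_def by simp

lemma first_nondesc_eqI:
  assumes "kk ! i \<le> kk ! Suc i" and "\<forall>j<i. kk ! Suc j < kk ! j"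
  shows "first_nondesc kk = i"
  unfolding first_nondesc_def
proof (rule Least_equality)
  fix j assume "kk ! j \<le> kk ! Suc j"
  with assms(2) show "i \<le> j" by (meson leD not_le_imp_less)
qed (fact assms(1))

lemma wstepE:
  assumes "wstep n l kk ll"
  defines "i \<equiv> first_nondesc kk"
  obtains "Suc i < length kk" "length ll = length kk" "kk ! i \<le> kk ! Suc i"
    "ll = kk[i := ll ! i, Suc i := ll ! Suc i]"
    "straight_coeff n l (kk ! i) (kk ! Suc i) (ll ! i) (ll ! Suc i) \<noteq> 0"
proof -
  obtain i' where i': "Suc i' < length kk" "length ll = length kk"
      "kk ! i' \<le> kk ! Suc i'" "\<forall>j<i'. kk ! Suc j < kk ! j"
      "\<forall>j<length kk. j \<noteq> i' \<and> j \<noteq> Suc i' \<longrightarrow> ll ! j = kk ! j"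
      "straight_coeff n l (kk ! i') (kk ! Suc i') (ll ! i') (ll ! Suc i') \<noteq> 0"
    using assms(1) unfolding wstep_def by blast
  have "i = i'" unfolding i_def using first_nondesc_eqI i'(3,4) by blast
  moreover have "ll = kk[i' := ll ! i', Suc i' := ll ! Suc i']"
    by (rule nth_equalityI) (use i' in \<open>auto simp: nth_list_update\<close>)
  ultimately show thesis using that i' by simp
qed

lemma step_label_eq_0_iff:
  assumes "wstep n l kk ll"
  shows "step_label n l kk ll = 0 \<longleftrightarrow> ll = bubble kk"
proof -
  let ?i = "first_nondesc kk"
  obtain "Suc ?i < length kk" "ll = kk[?i := ll ! ?i, Suc ?i := ll ! Suc ?i]"
    using assms by (rule wstepE)
  moreover have "rule_idx n l k1 k2 \<noteq> 0" for k1 k2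
    unfolding rule_idx_def by simp
  ultimately show ?thesis
    unfolding step_label_def bubble_def swap_adj_def Let_def
    by (metis (no_types, lifting) Suc_lessD length_list_update n_not_Suc_n nth_list_update_eq
        nth_list_update_neq)
qed

lemma step_label_nonzero:
  assumes "step_label n l kk ll \<noteq> 0"
  defines "i \<equiv> first_nondesc kk"
  shows "step_label n l kk ll = rule_idx n l (kk ! i) (kk ! Suc i)"
    and "\<not> (ll ! i = kk ! Suc i \<and> ll ! Suc i = kk ! i)"
  using assms unfolding step_label_def Let_def by (auto split: if_splits)

lemma no_wstep_from_sorted:
  assumes "sorted_wrt (>) kk"
  shows "\<not> wstep n l kk ll"
proof
  assume "wstep n l kk ll"
  then obtain i where "Suc i < length kk" "kk ! i \<le> kk ! Suc i"
    unfolding wstep_def by blast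
  with assms show False by (simp add: sorted_wrt_iff_nth_less) (meson leD lessI)
qed

section \<open>Straightening coefficients\<close>

text \<open>\<open>v\<^sub>a \<and> v\<^sub>b\<close> occurs in one of the sums of (R2)--(R4); the condition
  \<open>0 < sh + nl j\<close> encodes that the unshifted sum starts at \<open>i = 1\<close>.\<close>
definition nonleading_term :: "nat \<Rightarrow> nat \<Rightarrow> int \<Rightarrow> int \<Rightarrow> int \<Rightarrow> int \<Rightarrow> bool" where
  "nonleading_term n l k1 k2 a b \<longleftrightarrow>
     (\<exists>sh (j::nat). sh \<in> {0, gam' n l k1 k2, del' n l k1 k2, gam' n l k1 k2 + del' n l k1 k2}
        \<and> 0 < sh + int n * int l * int j
        \<and> a = k2 - sh - int n * int l * int j \<and> b = k1 + sh + int n * int l * int j \<and> b < a)"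

lemma nonleading_term_between:
  "nonleading_term n l k1 k2 a b \<Longrightarrow> k1 < b \<and> b < a \<and> a < k2"
  unfolding nonleading_term_def by auto

lemma ssum_eq_0:
  assumes "\<And>i::nat. lo \<le> i \<Longrightarrow> \<not> (a = k2 - sh - int n * int l * int i
                   \<and> b = k1 + sh + int n * int l * int i \<and> b < a)"
  shows "ssum n l k1 k2 lo sh f a b = 0"
proof -
  have "{i::nat. lo \<le> i \<and> a = k2 - sh - int n * int l * int i
           \<and> b = k1 + sh + int n * int l * int i \<and> b < a} = {}"
    using assms by blast
  then show ?thesis unfolding ssum_def by (simp only: sum.empty)
qed

lemma straight_coeff_nonleading:
  assumes "1 \<le> n" "1 \<le> l"
    and nz: "straight_coeff n l k1 k2 a b \<noteq> 0" and not_lead: "\<not> (a = k2 \<and> b = k1)"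
  shows "rule_idx n l k1 k2 \<noteq> 1 \<and> nonleading_term n l k1 k2 a b"
proof (rule ccontr)
  define g where "g = gam' n l k1 k2"
  define dl where "dl = del' n l k1 k2"
  have N: "0 < int n * int l" using assms(1,2) by simp
  have "0 \<le> g" "0 \<le> dl"
    unfolding g_def dl_def gam'_def del'_def using N by (simp_all only: pos_mod_sign)
  assume "\<not> ?thesis"
  then consider "rule_idx n l k1 k2 = 1" | "\<not> nonleading_term n l k1 k2 a b" by blast
  then have "straight_coeff n l k1 k2 a b = 0"
  proof cases
    case 1
    then show ?thesis unfolding straight_coeff_def Let_def using not_lead by simp
  next
    case 2
    have unshifted: "ssum n l k1 k2 1 0 f a b = 0" for f
    proof (rule ssum_eq_0)
      fix i :: nat assume "1 \<le> i"
      with N have "0 < 0 + int n * int l * int i" by simp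
      with 2 show "\<not> (a = k2 - 0 - int n * int l * int i \<and> b = k1 + 0 + int n * int l * int i \<and> b < a)"
        unfolding nonleading_term_def by blast
    qed
    have shifted: "ssum n l k1 k2 0 sh f a b = 0" if "sh \<in> {g, dl, g + dl}" "sh \<noteq> 0" for sh f
    proof (rule ssum_eq_0)
      fix i :: nat
      have "0 < sh + int n * int l * int i"
        using that \<open>0 \<le> g\<close> \<open>0 \<le> dl\<close> N by (auto intro: add_pos_nonneg)
      with 2 that(1) show "\<not> (a = k2 - sh - int n * int l * int i
          \<and> b = k1 + sh + int n * int l * int i \<and> b < a)"
        unfolding nonleading_term_def g_def dl_def by blast
    qed
    have no_lead: "(if a = k2 \<and> b = k1 then 1 else 0) = (0 :: complex poly fract)"
      using not_lead by simp
    show ?thesis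
      using no_lead unshifted shifted[of g] shifted[of dl] shifted[of "g + dl"]
        \<open>0 \<le> g\<close> \<open>0 \<le> dl\<close>
      unfolding straight_coeff_def Let_def rule_idx_def g_def[symmetric] dl_def[symmetric]
      by simp
  qed
  with nz show False by contradiction
qed

lemma sorted_wrt_greater_distinct:
  "sorted_wrt (>) (xs :: 'a::linorder list) \<Longrightarrow> distinct xs"
  using sorted_wrt_rev[of "(<)" xs] by (simp add: strict_sorted_iff)

lemma sorted_wrt_greater_nth_less_iff:
  assumes "sorted_wrt (>) (xs :: 'a::linorder list)" "i < length xs" "j < length xs"
  shows "xs ! i < xs ! j \<longleftrightarrow> j < i"
  using assms sorted_wrt_nth_less[OF assms(1)]
  by (metis less_asym linorder_neqE_nat)

lemma card_greater_nth:
  assumes "sorted_wrt (>) (xs :: 'a::linorder list)" "i < length xs"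
  shows "card {z \<in> set xs. xs ! i < z} = i"
proof -
  have "{z \<in> set xs. xs ! i < z} = (!) xs ` {..<i}"
    using sorted_wrt_greater_nth_less_iff[OF assms] assms(2)
    by (auto simp: in_set_conv_nth image_iff intro: order.strict_trans)
  moreover have "inj_on ((!) xs) {..<i}"
    using inj_on_nth[OF sorted_wrt_greater_distinct[OF assms(1)]] assms(2) by simp
  ultimately show ?thesis by (simp add: card_image)
qed

lemma card_greater_eq_nth:
  assumes "sorted_wrt (>) (xs :: 'a::linorder list)" "i < length xs"
  shows "card {z \<in> set xs. xs ! i \<le> z} = Suc i"
proof -
  have "{z \<in> set xs. xs ! i \<le> z} = insert (xs ! i) {z \<in> set xs. xs ! i < z}"
    using assms(2) by auto
  then show ?thesis using card_greater_nth[OF assms] by simp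
qed

lemma le_nth_iff_less_card:
  assumes "sorted_wrt (>) (xs :: 'a::linorder list)" "i < length xs"
  shows "w \<le> xs ! i \<longleftrightarrow> i < card {z \<in> set xs. w \<le> z}"
proof
  assume "w \<le> xs ! i"
  then have "{z \<in> set xs. xs ! i \<le> z} \<subseteq> {z \<in> set xs. w \<le> z}" by auto
  from card_mono[OF _ this] show "i < card {z \<in> set xs. w \<le> z}"
    using card_greater_eq_nth[OF assms] by simp
next
  assume "i < card {z \<in> set xs. w \<le> z}"
  moreover have "\<not> w \<le> xs ! i \<Longrightarrow> {z \<in> set xs. w \<le> z} \<subseteq> {z \<in> set xs. xs ! i < z}"
    by auto
  ultimately show "w \<le> xs ! i"
    using card_mono[of "{z \<in> set xs. xs ! i < z}" "{z \<in> set xs. w \<le> z}"]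
      card_greater_nth[OF assms] by fastforce
qed

lemma part_antimono:
  assumes "is_partition p" "1 \<le> i" "i \<le> j"
  shows "part p j \<le> part p i"
proof (cases "j \<le> length p")
  case True
  have "sorted_wrt (\<ge>) p" using assms(1) unfolding is_partition_def by simp
  then have "p ! (j - 1) \<le> p ! (i - 1)"
    using sorted_wrt_nth_less[of "(\<ge>)" p "i - 1" "j - 1"] True assms(2,3)
    by (cases "i = j") simp_all
  then show ?thesis unfolding part_def using True assms(2,3) by simp
qed (simp add: part_def)

lemma length_le_psize: "is_partition p \<Longrightarrow> length p \<le> psize p"
  unfolding is_partition_def psize_def
  by (induction p) (auto simp: Suc_le_eq)

lemma length_beta [simp]: "length (beta s p) = psize p"
  unfolding beta_def by simp

lemma nth_beta: "i < psize p \<Longrightarrow> beta s p ! i = int (part p (Suc i)) + s + 1 - int (Suc i)"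
  unfolding beta_def by (simp del: upt_Suc)

lemma sorted_beta:
  assumes "is_partition p"
  shows "sorted_wrt (>) (beta s p)"
proof (subst sorted_wrt_iff_nth_less, intro allI impI)
  fix i j assume "i < j" "j < length (beta s p)"
  moreover have "part p (Suc j) \<le> part p (Suc i)"
    using part_antimono[OF assms, of "Suc i" "Suc j"] \<open>i < j\<close> by simp
  ultimately show "beta s p ! j < beta s p ! i" by (simp add: nth_beta)
qed

lemma skew_eq_Sigma:
  assumes "is_partition lam" "psize lam = r"
  shows "skew lam mu = Sigma (Suc ` {i. i < r \<and> part mu (Suc i) < part lam (Suc i)})
             (\<lambda>i. {part mu i <.. part lam i})"
proof -
  have "length lam \<le> r" using length_le_psize[OF assms(1)] assms(2) by simp
  then have bound: "i \<le> r" if "1 \<le> j" "j \<le> part lam i" for i j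
    using that by (auto simp: part_def split: if_splits)
  show ?thesis (is "_ = ?R")
  proof (rule set_eqI, clarify, rule iffI)
    fix i j assume "(i, j) \<in> skew lam mu"
    then have "1 \<le> i" "i \<le> r" "j \<le> part lam i" "part mu i < j"
      unfolding skew_def diagram_def using bound by auto
    then show "(i, j) \<in> ?R" by (auto intro!: image_eqI[of _ _ "i - 1"])
  qed (auto simp: skew_def diagram_def)
qed

lemma fst_skew:
  assumes "is_partition lam" "psize lam = r"
  shows "fst ` skew lam mu = Suc ` {i. i < r \<and> part mu (Suc i) < part lam (Suc i)}"
  unfolding skew_eq_Sigma[OF assms] by force

lemma card_skew:
  assumes "is_partition lam" "psize lam = r"
  shows "card (skew lam mu) = (\<Sum>i | i < r \<and> part mu (Suc i) < part lam (Suc i).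
            part lam (Suc i) - part mu (Suc i))"
  unfolding skew_eq_Sigma[OF assms] by (subst card_SigmaI) (auto simp: sum.reindex)

section \<open>Exchanging an inner pair of \<beta>-numbers\<close>

lemma card_filter_insert:
  assumes "finite S" "x \<notin> S"
  shows "card {z \<in> insert x S. P z} = card {z \<in> S. P z} + of_bool (P x)"
proof -
  have "{z \<in> insert x S. P z} = (if P x then insert x {z \<in> S. P z} else {z \<in> S. P z})"
    by auto
  then show ?thesis using assms by simp
qed

lemma image_nth_filter: "(!) xs ` {i. i < length xs \<and> P (xs ! i)} = {z \<in> set xs. P z}"
  by (auto simp: in_set_conv_nth)

text \<open>In the notation of (H): \<open>L = \<beta>(\<lambda>)\<close>, \<open>M = \<beta>(\<mu>)\<close>, \<open>u = \<beta>\<^sub>x\<close>, \<open>v = \<beta>\<^sub>y\<close>,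
  \<open>b = \<beta>\<^sub>x + h\<close> and \<open>a = \<beta>\<^sub>y - h\<close>.\<close>
locale inner_exchange =
  fixes L M :: "int list" and u v a b :: int
  assumes sorted_L: "sorted_wrt (>) L" and sorted_M: "sorted_wrt (>) M"
    and same_length: "length L = length M"
    and exchange: "set L \<union> {u, v} = set M \<union> {a, b}"
    and u_notin_L: "u \<notin> set L" and v_notin_L: "v \<notin> set L"
    and a_notin_M: "a \<notin> set M" and b_notin_M: "b \<notin> set M"
    and nested: "u < b" "b < a" "a < v"
begin

lemma mem_L_iff_mem_M: "z \<notin> {u, v, a, b} \<Longrightarrow> z \<in> set L \<longleftrightarrow> z \<in> set M"
  using exchange by blast

lemma count_ge:
  "card {z \<in> set L. w \<le> z} + of_bool (w \<le> u) + of_bool (w \<le> v)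
     = card {z \<in> set M. w \<le> z} + of_bool (w \<le> a) + of_bool (w \<le> b)"
proof -
  have "card {z \<in> insert u (insert v (set L)). w \<le> z}
      = card {z \<in> set L. w \<le> z} + of_bool (w \<le> v) + of_bool (w \<le> u)"
    using card_filter_insert[of "insert v (set L)" u "\<lambda>z. w \<le> z"]
      card_filter_insert[of "set L" v "\<lambda>z. w \<le> z"] u_notin_L v_notin_L nested
    by simp
  moreover have "card {z \<in> insert a (insert b (set M)). w \<le> z}
      = card {z \<in> set M. w \<le> z} + of_bool (w \<le> b) + of_bool (w \<le> a)"
    using card_filter_insert[of "insert b (set M)" a "\<lambda>z. w \<le> z"]
      card_filter_insert[of "set M" b "\<lambda>z. w \<le> z"] a_notin_M b_notin_M nested
    by simp
  moreover have "insert u (insert v (set L)) = insert a (insert b (set M))"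
    using exchange by auto
  then have "card {z \<in> insert u (insert v (set L)). w \<le> z}
      = card {z \<in> insert a (insert b (set M)). w \<le> z}"
    by (simp only:)
  ultimately show ?thesis by linarith
qed

lemma diff_M_L: "set M - set L = {u, v}"
  and diff_L_M: "set L - set M = {a, b}"
  using exchange u_notin_L v_notin_L a_notin_M b_notin_M nested by auto

lemma u_in_M: "u \<in> set M" and v_in_M: "v \<in> set M" and b_in_L: "b \<in> set L"
  using diff_M_L diff_L_M by auto

text \<open>\<open>L ! i\<close> and \<open>M ! i\<close> are recovered from the counting functions of \<open>L\<close> and \<open>M\<close>
  (\<open>le_nth_iff_less_card\<close>), and these differ only through \<open>u, v, a, b\<close> (\<open>count_ge\<close>).\<close>
lemma rising_iff_M:
  assumes "i < length M"
  shows "M ! i < L ! i \<longleftrightarrow> u \<le> M ! i \<and> M ! i < b"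
proof -
  have "card {z \<in> set M. M ! i + 1 \<le> z} = i"
    using card_greater_nth[OF sorted_M assms] by (simp add: add1_zle_eq)
  moreover have "M ! i < L ! i \<longleftrightarrow> i < card {z \<in> set L. M ! i + 1 \<le> z}"
    using le_nth_iff_less_card[OF sorted_L, of i "M ! i + 1"] assms same_length
    by (simp add: add1_zle_eq)
  moreover have "M ! i \<noteq> a" "M ! i \<noteq> b"
    using assms a_notin_M b_notin_M nth_mem by metis+
  ultimately show ?thesis
    using count_ge[of "M ! i + 1"] nested by (auto simp: of_bool_def split: if_splits)
qed

lemma rising_iff_L:
  assumes "i < length M"
  shows "M ! i < L ! i \<longleftrightarrow> u < L ! i \<and> L ! i \<le> b"
proof -
  have "card {z \<in> set L. L ! i \<le> z} = Suc i"
    using card_greater_eq_nth[OF sorted_L] assms same_length by simp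
  moreover have "L ! i \<le> M ! i \<longleftrightarrow> i < card {z \<in> set M. L ! i \<le> z}"
    using le_nth_iff_less_card[OF sorted_M assms] .
  moreover have "L ! i \<noteq> u" "L ! i \<noteq> v"
    using assms same_length u_notin_L v_notin_L nth_mem by metis+
  ultimately show ?thesis
    using count_ge[of "L ! i"] nested by (auto simp: of_bool_def split: if_splits)
qed

lemma falling_iff:
  assumes "i < length M"
  shows "L ! i < M ! i \<longleftrightarrow> a < M ! i \<and> M ! i \<le> v"
proof -
  have "card {z \<in> set M. M ! i \<le> z} = Suc i"
    using card_greater_eq_nth[OF sorted_M assms] .
  moreover have "M ! i \<le> L ! i \<longleftrightarrow> i < card {z \<in> set L. M ! i \<le> z}"
    using le_nth_iff_less_card[OF sorted_L] assms same_length by simp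
  moreover have "M ! i \<noteq> a" "M ! i \<noteq> b"
    using assms a_notin_M b_notin_M nth_mem by metis+
  ultimately show ?thesis
    using count_ge[of "M ! i"] nested by (auto simp: of_bool_def split: if_splits)
qed

lemma Max_rising:
  assumes "q < length M" "M ! q = u"
  shows "Max {i. i < length M \<and> M ! i < L ! i} = q"
proof (rule Max_eqI)
  fix i assume "i \<in> {i. i < length M \<and> M ! i < L ! i}"
  then have "i < length M" "\<not> M ! i < M ! q"
    using rising_iff_M assms(2) by auto
  then show "i \<le> q"
    using sorted_wrt_greater_nth_less_iff[OF sorted_M] assms(1) by fastforce
qed (use assms rising_iff_M nested in auto)

lemma Min_falling:
  assumes "p < length M" "M ! p = v"
  shows "Min {i. i < length M \<and> L ! i < M ! i} = p"
proof (rule Min_eqI)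
  fix i assume "i \<in> {i. i < length M \<and> L ! i < M ! i}"
  then have "i < length M" "\<not> M ! p < M ! i"
    using falling_iff assms(2) by auto
  then show "p \<le> i"
    using sorted_wrt_greater_nth_less_iff[OF sorted_M] assms(1) by fastforce
qed (use assms falling_iff nested in auto)

text \<open>Between \<open>u\<close> and \<open>b\<close> the sets \<open>L\<close> and \<open>M\<close> agree, so the rising entries move the
  block \<open>{u} \<union> C\<close> of \<open>M\<close> onto the block \<open>C \<union> {b}\<close> of \<open>L\<close>.\<close>
lemma sum_rising:
  "(\<Sum>i | i < length M \<and> M ! i < L ! i. L ! i - M ! i) = b - u"
proof -
  define I where "I = {i. i < length M \<and> M ! i < L ! i}"
  define C where "C = {z \<in> set M. u < z \<and> z < b}"
  have I_L: "I = {i. i < length L \<and> u < L ! i \<and> L ! i \<le> b}"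
    unfolding I_def using rising_iff_L same_length by auto
  have I_M: "I = {i. i < length M \<and> u \<le> M ! i \<and> M ! i < b}"
    unfolding I_def using rising_iff_M by auto
  have L_block: "(!) L ` I = insert b C"
  proof -
    have "(!) L ` I = {z \<in> set L. u < z \<and> z \<le> b}"
      unfolding I_L by (rule image_nth_filter)
    also have "\<dots> = insert b C"
      unfolding C_def using mem_L_iff_mem_M b_in_L nested by auto
    finally show ?thesis .
  qed
  have M_block: "(!) M ` I = insert u C"
  proof -
    have "(!) M ` I = {z \<in> set M. u \<le> z \<and> z < b}"
      unfolding I_M by (rule image_nth_filter)
    also have "\<dots> = insert u C"
      unfolding C_def using u_in_M nested by auto
    finally show ?thesis .
  qed
  have inj: "inj_on ((!) L) I" "inj_on ((!) M) I"
    by (simp_all add: I_def inj_on_nth sorted_wrt_greater_distinct sorted_L sorted_M same_length)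
  have "(\<Sum>i\<in>I. L ! i - M ! i) = (\<Sum>i\<in>I. L ! i) - (\<Sum>i\<in>I. M ! i)"
    by (simp add: sum_subtractf)
  also have "\<dots> = \<Sum>((!) L ` I) - \<Sum>((!) M ` I)"
    using inj by (simp add: sum.reindex)
  also have "\<dots> = b - u"
    unfolding L_block M_block C_def using nested by simp
  finally show ?thesis unfolding I_def .
qed

end

lemma ribbon_of_inner_exchange:
  assumes lam: "is_partition lam" "psize lam = r" and mu: "is_partition mu" "psize mu = r"
    and "inner_exchange (beta s lam) (beta s mu) u v a b"
  shows "int (ribbon_len lam mu) = b - u"
    and "beta s mu ! (head_row (skew lam mu) - 1) = u"
    and "beta s mu ! (tail_row (skew mu lam) - 1) = v"
proof -
  interpret inner_exchange "beta s lam" "beta s mu" u v a b by fact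
  define L where "L = beta s lam"
  define M where "M = beta s mu"
  have len: "length M = r" unfolding M_def using mu by simp
  have entry_diff: "L ! i - M ! i = int (part lam (Suc i)) - int (part mu (Suc i))" if "i < r" for i
    using that lam mu by (simp add: L_def M_def nth_beta)
  define I where "I = {i. i < r \<and> part mu (Suc i) < part lam (Suc i)}"
  define J where "J = {i. i < r \<and> part lam (Suc i) < part mu (Suc i)}"
  have I_eq: "I = {i. i < length M \<and> M ! i < L ! i}"
    unfolding I_def len using entry_diff by force
  have J_eq: "J = {i. i < length M \<and> L ! i < M ! i}"
    unfolding J_def len using entry_diff by force
  obtain q where q: "q < length M" "M ! q = u"
    using u_in_M by (auto simp: M_def in_set_conv_nth)
  obtain p where p: "p < length M" "M ! p = v"
    using v_in_M by (auto simp: M_def in_set_conv_nth)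
  have "int (ribbon_len lam mu) = (\<Sum>i\<in>I. int (part lam (Suc i) - part mu (Suc i)))"
    unfolding ribbon_len_def card_skew[OF lam] I_def by simp
  also have "\<dots> = (\<Sum>i\<in>I. L ! i - M ! i)"
    by (rule sum.cong) (auto simp: I_def entry_diff of_nat_diff)
  also have "\<dots> = b - u"
    unfolding I_eq using sum_rising by (simp add: L_def M_def)
  finally show "int (ribbon_len lam mu) = b - u" .
  have "q \<in> I" unfolding I_eq using q rising_iff_M[of q] nested by (simp add: L_def M_def)
  then have "head_row (skew lam mu) = Suc (Max I)"
    unfolding head_row_def fst_skew[OF lam] I_def[symmetric]
    by (intro mono_Max_commute[symmetric]) (auto simp: I_def mono_def)
  also have "Max I = q"
    unfolding I_eq using Max_rising q by (simp add: L_def M_def)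
  finally show "beta s mu ! (head_row (skew lam mu) - 1) = u"
    using q by (simp add: M_def)
  have "p \<in> J" unfolding J_eq using p falling_iff[of p] nested by (simp add: L_def M_def)
  then have "tail_row (skew mu lam) = Suc (Min J)"
    unfolding tail_row_def fst_skew[OF mu] J_def[symmetric]
    by (intro mono_Min_commute[symmetric]) (auto simp: J_def mono_def)
  also have "Min J = p"
    unfolding J_eq using Min_falling p by (simp add: L_def M_def)
  finally show "beta s mu ! (tail_row (skew mu lam) - 1) = v"
    using p by (simp add: M_def)
qed

section \<open>Good sequences\<close>

lemma set_update_adj_distinct:
  assumes "distinct xs" "Suc i < length xs"
  shows "set (xs[i := a, Suc i := b]) = (set xs - {xs ! i, xs ! Suc i}) \<union> {a, b}"
  using assms
  by (auto simp: set_eq_iff in_set_conv_nth nth_list_update nth_eq_iff_index_eq)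
    (metis lessI less_irrefl)

lemma exchanged_elements_fresh:
  assumes "finite X" "card Y = card X" "Y = (X - {k1, k2}) \<union> {a, b}"
    and "k1 \<in> X" "k2 \<in> X" "k1 \<noteq> k2" "a \<notin> {k1, k2}" "b \<notin> {k1, k2}" "a \<noteq> b"
  shows "a \<notin> X" "b \<notin> X"
proof -
  have "card {k1, k2} \<le> card X"
    using assms(1,4,5) by (intro card_mono) auto
  then have "2 \<le> card X" using assms(6) by simp
  moreover have "card (X - {k1, k2}) = card X - 2"
    using assms(1,4-6) by (simp add: card_Diff_subset)
  ultimately have small: "card (insert c (X - {k1, k2})) < card X" for c
    using assms(1) by (auto simp: card_insert_if)
  show "a \<notin> X"
  proof
    assume "a \<in> X"
    then have "Y = insert b (X - {k1, k2})" using assms(3,7) by auto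
    then show False using small[of b] assms(2) by simp
  qed
  show "b \<notin> X"
  proof
    assume "b \<in> X"
    then have "Y = insert a (X - {k1, k2})" using assms(3,8) by auto
    then show False using small[of a] assms(2) by simp
  qed
qed

lemma wstep_bubble_invariants:
  assumes "wstep n l kk (bubble kk)"
  shows "set (bubble kk) = set kk" "distinct (bubble kk) = distinct kk"
proof -
  obtain "Suc (first_nondesc kk) < length kk"
    using assms by (rule wstepE)
  then show "set (bubble kk) = set kk" "distinct (bubble kk) = distinct kk"
    unfolding bubble_def by (simp_all add: set_swap_adj distinct_swap_adj)
qed

lemma bubble_run_invariants:
  assumes "p \<le> q"
    and "\<And>j. p \<le> j \<Longrightarrow> j < q \<Longrightarrow> wstep n l (ks ! j) (ks ! Suc j)"
    and "\<And>j. p \<le> j \<Longrightarrow> j < q \<Longrightarrow> ks ! Suc j = bubble (ks ! j)"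
  shows "set (ks ! q) = set (ks ! p) \<and> distinct (ks ! q) = distinct (ks ! p)"
  using assms(1)
proof (induction q rule: dec_induct)
  case (step j)
  then have "ks ! Suc j = bubble (ks ! j)" "wstep n l (ks ! j) (bubble (ks ! j))"
    using assms(2,3)[of j] by auto
  with step.IH show ?case by (simp add: wstep_bubble_invariants)
qed simp

lemma good_seq_labelled_step:
  assumes "good_seq n l s lam mu ks"
  obtains e where "{j. Suc j < length ks \<and> step_label n l (ks ! j) (ks ! Suc j) \<noteq> 0} = {e}"
proof -
  have "card {j. Suc j < length ks \<and> step_label n l (ks ! j) (ks ! Suc j) \<noteq> 0} = 1"
    using assms unfolding good_seq_def by blast
  then show thesis using that by (rule card_1_singletonE)
qed

lemma good_seq_structure:
  assumes good: "good_seq n l s lam mu ks"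
    and e: "{j. Suc j < length ks \<and> step_label n l (ks ! j) (ks ! Suc j) \<noteq> 0} = {e}"
  shows "Suc e < length ks"
    and "\<And>j. Suc j < length ks \<Longrightarrow> wstep n l (ks ! j) (ks ! Suc j)"
    and "\<And>j. Suc j < length ks \<Longrightarrow> j \<noteq> e \<Longrightarrow> ks ! Suc j = bubble (ks ! j)"
    and "ks ! 0 = rev (beta s mu)" "ks ! (length ks - 1) = beta s lam"
proof -
  show "Suc e < length ks" using e by auto
  show wsteps: "wstep n l (ks ! j) (ks ! Suc j)" if "Suc j < length ks" for j
    using good that unfolding good_seq_def by blast
  show "ks ! Suc j = bubble (ks ! j)" if "Suc j < length ks" "j \<noteq> e" for j
    using that e step_label_eq_0_iff[OF wsteps[OF that(1)]] by auto
  show "ks ! 0 = rev (beta s mu)" "ks ! (length ks - 1) = beta s lam"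
    using good unfolding good_seq_def by (auto simp: hd_conv_nth last_conv_nth)
qed

lemma good_seq_around_labelled_step:
  assumes good: "good_seq n l s lam mu ks" and mu: "is_partition mu"
    and labelled: "{j. Suc j < length ks \<and> step_label n l (ks ! j) (ks ! Suc j) \<noteq> 0} = {e}"
  shows "set (ks ! e) = set (beta s mu)" "distinct (ks ! e)"
    and "set (ks ! Suc e) = set (beta s lam)"
proof -
  note S = good_seq_structure[OF good labelled]
  have "set (ks ! e) = set (ks ! 0) \<and> distinct (ks ! e) = distinct (ks ! 0)"
    using S(1) by (intro bubble_run_invariants[where n = n and l = l]) (auto intro: S(2,3))
  then show "set (ks ! e) = set (beta s mu)" "distinct (ks ! e)"
    using S(4) sorted_wrt_greater_distinct[OF sorted_beta[OF mu]] by auto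
  have "set (ks ! (length ks - 1)) = set (ks ! Suc e)"
    using S(1)
    by (intro bubble_run_invariants[where n = n and l = l, THEN conjunct1]) (auto intro: S(2,3))
  then show "set (ks ! Suc e) = set (beta s lam)"
    using S(5) by simp
qed

lemma good_seq_exchange:
  assumes "1 \<le> n" "1 \<le> l"
    and lam: "is_partition lam" "psize lam = r" and mu: "is_partition mu" "psize mu = r"
    and good: "good_seq n l s lam mu ks"
  obtains e k1 k2 a b where
    "{j. Suc j < length ks \<and> step_label n l (ks ! j) (ks ! Suc j) \<noteq> 0} = {e}"
    "distinct (ks ! e)" "Suc (first_nondesc (ks ! e)) < length (ks ! e)"
    "ks ! e ! first_nondesc (ks ! e) = k1" "ks ! e ! Suc (first_nondesc (ks ! e)) = k2"
    "ks ! Suc e = (ks ! e)[first_nondesc (ks ! e) := a, Suc (first_nondesc (ks ! e)) := b]"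
    "inner_exchange (beta s lam) (beta s mu) k1 k2 a b"
    "step_label n l (ks ! e) (ks ! Suc e) = rule_idx n l k1 k2" "rule_idx n l k1 k2 \<noteq> 1"
    "nonleading_term n l k1 k2 a b"
proof -
  obtain e where labelled:
      "{j. Suc j < length ks \<and> step_label n l (ks ! j) (ks ! Suc j) \<noteq> 0} = {e}"
    using good by (rule good_seq_labelled_step)
  note e = good_seq_structure(1)[OF good labelled] labelled
  note wsteps = good_seq_structure(2)[OF good labelled]
  note around = good_seq_around_labelled_step[OF good mu(1) labelled]
  have labelled_step: "step_label n l (ks ! e) (ks ! Suc e) \<noteq> 0"
    using labelled by blast
  define K where "K = ks ! e"
  define i where "i = first_nondesc K"
  define k1 where "k1 = K ! i"
  define k2 where "k2 = K ! Suc i"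
  define a where "a = ks ! Suc e ! i"
  define b where "b = ks ! Suc e ! Suc i"
  have w: "wstep n l K (ks ! Suc e)" using wsteps e(1) by (simp add: K_def)
  have i_bound: "Suc i < length K"
    by (rule wstepE[OF w]) (simp add: i_def)
  have update: "ks ! Suc e = K[i := a, Suc i := b]"
    by (rule wstepE[OF w]) (simp add: i_def a_def b_def)
  have "straight_coeff n l k1 k2 a b \<noteq> 0"
    by (rule wstepE[OF w]) (simp add: i_def k1_def k2_def a_def b_def)
  moreover have label: "step_label n l K (ks ! Suc e) = rule_idx n l k1 k2"
    and "\<not> (a = k2 \<and> b = k1)"
    using step_label_nonzero[of n l K "ks ! Suc e"] labelled_step
    unfolding i_def k1_def k2_def a_def b_def K_def by auto
  ultimately have "rule_idx n l k1 k2 \<noteq> 1" and nonleading: "nonleading_term n l k1 k2 a b"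
    using straight_coeff_nonleading assms(1,2) by blast+
  then have order: "k1 < b" "b < a" "a < k2" using nonleading_term_between by blast+
  have K: "set K = set (beta s mu)" "distinct K"
    using around(1,2) by (simp_all add: K_def)
  have "set (beta s lam) = (set (beta s mu) - {k1, k2}) \<union> {a, b}"
    using around(3) update set_update_adj_distinct[OF K(2) i_bound] K(1)
    by (simp add: k1_def k2_def)
  moreover have "k1 \<in> set (beta s mu)" "k2 \<in> set (beta s mu)"
    using K(1) i_bound unfolding k1_def k2_def by (metis Suc_lessD nth_mem)+
  moreover have "card (set (beta s lam)) = card (set (beta s mu))"
    using lam mu by (simp add: distinct_card sorted_wrt_greater_distinct sorted_beta)
  ultimately have "inner_exchange (beta s lam) (beta s mu) k1 k2 a b"
    using exchanged_elements_fresh[of "set (beta s mu)" "set (beta s lam)" k1 k2 a b] order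
    by unfold_locales (use lam mu sorted_beta in auto)
  then show thesis
    using that[of e k1 k2 a b] e(2) K(2) i_bound update label nonleading \<open>rule_idx n l k1 k2 \<noteq> 1\<close>
    unfolding K_def i_def k1_def k2_def by simp
qed

definition precedes :: "int list \<Rightarrow> int \<Rightarrow> int \<Rightarrow> bool" where
  "precedes kk y x \<longleftrightarrow> (\<exists>p q. p < q \<and> q < length kk \<and> kk ! p = y \<and> kk ! q = x)"

lemma precedes_swap_adj:
  assumes "precedes kk y x" "x < y" "kk ! i \<le> kk ! Suc i" "Suc i < length kk"
  shows "precedes (swap_adj kk i) y x"
proof -
  obtain p q where pq: "p < q" "q < length kk" "kk ! p = y" "kk ! q = x"
    using assms(1) unfolding precedes_def by blast
  define f where "f j = (if j = i then Suc i else if j = Suc i then i else j)" for j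
  have nth_f: "swap_adj kk i ! f j = kk ! j" if "j < length kk" for j
    using that assms(4) unfolding swap_adj_def f_def by (auto simp: nth_list_update)
  have "\<not> (p = i \<and> q = Suc i)" using pq assms(2,3) by auto
  then have "f p < f q" using pq(1) unfolding f_def by auto
  moreover have "f q < length kk" using pq(2) assms(4) unfolding f_def by auto
  ultimately show ?thesis
    unfolding precedes_def using nth_f[of p] nth_f[of q] pq
    by (intro exI[of _ "f p"] exI[of _ "f q"]) auto
qed

lemma precedes_swap_adj_self:
  "Suc i < length kk \<Longrightarrow> precedes (swap_adj kk i) (kk ! Suc i) (kk ! i)"
  unfolding precedes_def swap_adj_def
  by (intro exI[of _ i] exI[of _ "Suc i"]) (simp add: nth_list_update)

lemma precedes_asym:
  assumes "distinct kk" "precedes kk y x"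
  shows "\<not> precedes kk x y"
proof
  assume "precedes kk x y"
  then obtain p' q' where pq': "p' < q'" "q' < length kk" "kk ! p' = x" "kk ! q' = y"
    unfolding precedes_def by blast
  obtain p q where pq: "p < q" "q < length kk" "kk ! p = y" "kk ! q = x"
    using assms(2) unfolding precedes_def by blast
  have "q = p'" using nth_eq_iff_index_eq[OF assms(1), of q p'] pq pq' by simp
  moreover have "p = q'" using nth_eq_iff_index_eq[OF assms(1), of p q'] pq pq' by simp
  ultimately show False using pq(1) pq'(1) by simp
qed

lemma bubble_run_keeps_inversion:
  assumes "p \<le> q"
    and "\<And>j. p \<le> j \<Longrightarrow> j < q \<Longrightarrow> wstep n l (ks ! j) (ks ! Suc j)"
    and "\<And>j. p \<le> j \<Longrightarrow> j < q \<Longrightarrow> ks ! Suc j = bubble (ks ! j)"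
    and "precedes (ks ! p) y x" "x < y"
  shows "precedes (ks ! q) y x"
  using assms(1)
proof (induction q rule: dec_induct)
  case (step j)
  have "wstep n l (ks ! j) (ks ! Suc j)" using assms(2) step.hyps by simp
  then obtain "Suc (first_nondesc (ks ! j)) < length (ks ! j)"
      "ks ! j ! first_nondesc (ks ! j) \<le> ks ! j ! Suc (first_nondesc (ks ! j))"
    by (rule wstepE)
  with step.IH show ?case
    using assms(3)[of j] step.hyps precedes_swap_adj assms(5) by (simp add: bubble_def)
qed (fact assms(4))

lemma bubble_runs_agree:
  assumes "p \<le> q" "ks ! p = ks' ! p"
    and "\<And>j. p \<le> j \<Longrightarrow> j < q \<Longrightarrow> ks ! Suc j = bubble (ks ! j) \<and> ks' ! Suc j = bubble (ks' ! j)"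
  shows "ks ! q = ks' ! q"
  using assms(1)
proof (induction q rule: dec_induct)
  case (step j)
  with assms(3)[of j] show ?case by simp
qed (fact assms(2))

text \<open>The labelled step of a good sequence is the first time the pair \<open>k\<^sub>1 < k\<^sub>2\<close>
  sits at the first non-descent: had the pair been there earlier, a bubble step would
  have inverted it for good.\<close>
lemma labelled_step_first_occurrence:
  assumes good: "good_seq n l s lam mu ks"
    and labelled: "{j. Suc j < length ks \<and> step_label n l (ks ! j) (ks ! Suc j) \<noteq> 0} = {e}"
    and at_e: "distinct (ks ! e)" "Suc i < length (ks ! e)" "ks ! e ! i = k1" "ks ! e ! Suc i = k2"
      "k1 < k2"
    and earlier: "e' < e" "ks ! e' ! first_nondesc (ks ! e') = k1"
      "ks ! e' ! Suc (first_nondesc (ks ! e')) = k2"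
  shows False
proof -
  note wsteps = good_seq_structure(2)[OF good labelled]
  note bubbles = good_seq_structure(3)[OF good labelled]
  have e_bound: "Suc e < length ks" by (rule good_seq_structure(1)[OF good labelled])
  have "wstep n l (ks ! e') (ks ! Suc e')" using wsteps earlier(1) e_bound by simp
  then obtain "Suc (first_nondesc (ks ! e')) < length (ks ! e')"
    by (rule wstepE)
  then have inverted: "precedes (ks ! Suc e') k2 k1"
    using precedes_swap_adj_self[of "first_nondesc (ks ! e')" "ks ! e'"] bubbles[of e'] earlier e_bound
    by (simp add: bubble_def)
  have "precedes (ks ! e) k2 k1"
    by (rule bubble_run_keeps_inversion[where n = n and l = l and p = "Suc e'"])
      (use inverted earlier(1) e_bound at_e(5) in \<open>auto intro: wsteps bubbles\<close>)
  moreover have "precedes (ks ! e) k1 k2"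
    unfolding precedes_def using at_e by (intro exI[of _ i] exI[of _ "Suc i"]) simp
  ultimately show False using precedes_asym[OF at_e(1)] by simp
qed

lemma good_seq_stops_at_lam:
  assumes "good_seq n l s lam mu ks" "is_partition lam" "j < length ks" "ks ! j = beta s lam"
  shows "j = length ks - 1"
proof (rule ccontr)
  assume "j \<noteq> length ks - 1"
  then have "wstep n l (ks ! j) (ks ! Suc j)"
    using assms(1,3) unfolding good_seq_def by auto
  then show False
    using no_wstep_from_sorted[OF sorted_beta[OF assms(2)]] assms(4) by simp
qed

lemma good_seqs_eq_if_agree_through_labelled_step:
  assumes lam: "is_partition lam"
    and good: "good_seq n l s lam mu ks" and good': "good_seq n l s lam mu ks'"
    and labelled: "{j. Suc j < length ks \<and> step_label n l (ks ! j) (ks ! Suc j) \<noteq> 0} = {e}"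
    and labelled': "{j. Suc j < length ks' \<and> step_label n l (ks' ! j) (ks' ! Suc j) \<noteq> 0} = {e}"
    and prefix: "\<And>j. j \<le> Suc e \<Longrightarrow> ks ! j = ks' ! j"
  shows "ks' = ks"
proof -
  note S = good_seq_structure[OF good labelled]
  note S' = good_seq_structure[OF good' labelled']
  have agree: "ks ! j = ks' ! j" if "j < length ks" "j < length ks'" for j
  proof (cases "Suc e \<le> j")
    case True
    then show ?thesis
      by (rule bubble_runs_agree[of "Suc e"]) (use prefix[of "Suc e"] that S(3) S'(3) in auto)
  qed (use prefix in simp)
  have "length ks \<le> length ks'"
  proof (rule ccontr)
    assume "\<not> length ks \<le> length ks'"
    then have "ks ! (length ks' - 1) = beta s lam"
      using agree[of "length ks' - 1"] S'(5) S'(1) by simp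
    then have "length ks' - 1 = length ks - 1"
      using good_seq_stops_at_lam[OF good lam] \<open>\<not> length ks \<le> length ks'\<close> by simp
    then show False using \<open>\<not> length ks \<le> length ks'\<close> S'(1) by linarith
  qed
  moreover have "length ks' \<le> length ks"
  proof (rule ccontr)
    assume "\<not> length ks' \<le> length ks"
    then have "ks' ! (length ks - 1) = beta s lam"
      using agree[of "length ks - 1"] S(5) S(1) by simp
    then have "length ks - 1 = length ks' - 1"
      using good_seq_stops_at_lam[OF good' lam] \<open>\<not> length ks' \<le> length ks\<close> by simp
    then show False using \<open>\<not> length ks' \<le> length ks\<close> S(1) by linarith
  qed
  ultimately show ?thesis
    using agree by (intro nth_equalityI) auto
qed

lemma good_seq_unique:
  assumes "1 \<le> n" "1 \<le> l"
    and lam: "is_partition lam" "psize lam = r" and mu: "is_partition mu" "psize mu = r"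
    and good: "good_seq n l s lam mu ks" and good': "good_seq n l s lam mu ks'"
  shows "ks' = ks"
proof -
  obtain e k1 k2 a b where labelled:
      "{j. Suc j < length ks \<and> step_label n l (ks ! j) (ks ! Suc j) \<noteq> 0} = {e}"
    and at_e: "distinct (ks ! e)" "Suc (first_nondesc (ks ! e)) < length (ks ! e)"
      "ks ! e ! first_nondesc (ks ! e) = k1" "ks ! e ! Suc (first_nondesc (ks ! e)) = k2"
    and update: "ks ! Suc e = (ks ! e)[first_nondesc (ks ! e) := a, Suc (first_nondesc (ks ! e)) := b]"
    and exch: "inner_exchange (beta s lam) (beta s mu) k1 k2 a b"
    by (rule good_seq_exchange[OF assms(1,2) lam mu good])
  obtain e' k1' k2' a' b' where labelled':
      "{j. Suc j < length ks' \<and> step_label n l (ks' ! j) (ks' ! Suc j) \<noteq> 0} = {e'}"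
    and at_e': "distinct (ks' ! e')" "Suc (first_nondesc (ks' ! e')) < length (ks' ! e')"
      "ks' ! e' ! first_nondesc (ks' ! e') = k1'" "ks' ! e' ! Suc (first_nondesc (ks' ! e')) = k2'"
    and update': "ks' ! Suc e' = (ks' ! e')[first_nondesc (ks' ! e') := a', Suc (first_nondesc (ks' ! e')) := b']"
    and exch': "inner_exchange (beta s lam) (beta s mu) k1' k2' a' b'"
    by (rule good_seq_exchange[OF assms(1,2) lam mu good'])
  interpret X: inner_exchange "beta s lam" "beta s mu" k1 k2 a b by (fact exch)
  interpret X': inner_exchange "beta s lam" "beta s mu" k1' k2' a' b' by (fact exch')
  have same_pairs: "k1' = k1" "k2' = k2" "a' = a" "b' = b"
    using X.diff_M_L X'.diff_M_L X.diff_L_M X'.diff_L_M X.nested X'.nested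
    by (metis doubleton_eq_iff order.strict_trans not_less_iff_gr_or_eq)+
  note S = good_seq_structure[OF good labelled]
  note S' = good_seq_structure[OF good' labelled']
  have before: "ks ! j = ks' ! j" if "j \<le> e" "j \<le> e'" for j
    by (rule bubble_runs_agree[of 0]) (use that S(1,3,4) S'(1,3,4) in auto)
  have "e' = e"
  proof (rule ccontr)
    assume "e' \<noteq> e"
    then consider "e' < e" | "e < e'" by linarith
    then show False
    proof cases
      case 1
      then show False
        using labelled_step_first_occurrence[OF good labelled at_e(1,2,3,4) _ 1] before[of e']
          at_e' same_pairs X.nested by auto
    next
      case 2
      then show False
        using labelled_step_first_occurrence[OF good' labelled' at_e'(1,2,3,4) _ 2] before[of e]
          at_e same_pairs X.nested by auto
    qed
  qed
  then have "ks ! j = ks' ! j" if "j \<le> Suc e" for j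
    using before[of j] that update update' same_pairs before[of e] by (cases "j = Suc e") auto
  then show ?thesis
    using good_seqs_eq_if_agree_through_labelled_step[OF lam(1) good good' labelled]
      labelled' \<open>e' = e\<close> by simp
qed

lemma ribbon_len_mod_nonleading:
  assumes "nonleading_term n l k1 k2 a b" "int h = b - k1"
  shows "\<exists>\<eta>\<in>{0, gam' n l k1 k2, del' n l k1 k2, gam' n l k1 k2 + del' n l k1 k2}.
           int h mod (int n * int l) = \<eta> mod (int n * int l)"
  using assms unfolding nonleading_term_def by (auto simp: algebra_simps)

theorem mainTheorem16:
  fixes n l m :: nat and sl :: "int list"
    and bl bm :: "nat list list" and lam mu :: "nat list"
    and r :: nat and ks :: "int list list" and e t :: nat
  assumes "1 \<le> n" and "1 \<le> l" and "1 \<le> m" and "length sl = l"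
    \<comment> \<open>hypothesis (H)\<close>
    and "bl \<in> multipartitions l m" and "bm \<in> multipartitions l m"
    and "corr n l sl bl lam" and "corr n l sl bm mu"
    and "mp_prec n l sl bl bm"
    and "psize lam = r" and "psize mu = r"
    and "int (card (set (beta (sum_list sl) lam) \<inter> set (beta (sum_list sl) mu))) = int r - 2"
    \<comment> \<open>a good sequence whose unique step with m = 1 is the e-th one, via rule (R_t)\<close>
    and "good_seq n l (sum_list sl) lam mu ks"
    and "Suc e < length ks"
    and "step_label n l (ks ! e) (ks ! Suc e) = t" and "t \<noteq> 0"
  shows
    "(\<forall>ks'. good_seq n l (sum_list sl) lam mu ks' \<longrightarrow> ks' = ks)
     \<and> (\<forall>ks' e'. good_seq n l (sum_list sl) lam mu ks' \<and> Suc e' < length ks'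
            \<and> step_label n l (ks' ! e') (ks' ! Suc e') \<noteq> 0
            \<longrightarrow> step_label n l (ks' ! e') (ks' ! Suc e') = t)
     \<and> (let s = sum_list sl; N = int n * int l;
            h = ribbon_len lam mu;
            x = head_row (skew lam mu); y = tail_row (skew mu lam);
            bx = beta s mu ! (x - 1); by' = beta s mu ! (y - 1);
            \<gamma> = (cc n by' - cc n bx) mod N;
            \<delta> = (int n * (dd n l by' - dd n l bx)) mod N
        in (\<gamma>, \<delta>) \<noteq> (0, 0)
           \<and> (\<exists>\<eta>\<in>{0, \<gamma>, \<delta>, \<gamma> + \<delta>}. int h mod N = \<eta> mod N))"
proof -
  define s where "s = sum_list sl"
  have lam: "is_partition lam" "psize lam = r" and mu: "is_partition mu" "psize mu = r"
    using assms(7,8,10,11) unfolding corr_def by simp_all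
  have good: "good_seq n l s lam mu ks" using assms(13) by (simp add: s_def)
  obtain e0 k1 k2 a b where labelled:
      "{j. Suc j < length ks \<and> step_label n l (ks ! j) (ks ! Suc j) \<noteq> 0} = {e0}"
    and exch: "inner_exchange (beta s lam) (beta s mu) k1 k2 a b"
    and label: "step_label n l (ks ! e0) (ks ! Suc e0) = rule_idx n l k1 k2"
    and nontrivial: "rule_idx n l k1 k2 \<noteq> 1"
    and nonleading: "nonleading_term n l k1 k2 a b"
    by (rule good_seq_exchange[OF assms(1,2) lam mu good])
  have unique: "good_seq n l s lam mu ks' \<Longrightarrow> ks' = ks" for ks'
    using good_seq_unique[OF assms(1,2) lam mu good] by simp
  have "e = e0" using labelled assms(14-16) by blast
  then have t: "t = rule_idx n l k1 k2" using assms(15) label by simp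
  have ribbon: "int (ribbon_len lam mu) = b - k1"
      "beta s mu ! (head_row (skew lam mu) - 1) = k1" "beta s mu ! (tail_row (skew mu lam) - 1) = k2"
    using ribbon_of_inner_exchange[OF lam mu exch] by simp_all
  have "step_label n l (ks' ! j) (ks' ! Suc j) = t"
    if "good_seq n l s lam mu ks'" "Suc j < length ks'" "step_label n l (ks' ! j) (ks' ! Suc j) \<noteq> 0"
    for ks' j
  proof -
    have "ks' = ks" by (rule unique[OF that(1)])
    moreover from this have "j = e0" using that(2,3) labelled by blast
    ultimately show ?thesis using label t by simp
  qed
  moreover have "(gam' n l k1 k2, del' n l k1 k2) \<noteq> (0, 0)"
    using nontrivial unfolding rule_idx_def by auto
  ultimately show ?thesis
    using unique ribbon_len_mod_nonleading[OF nonleading ribbon(1)]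
    unfolding Let_def s_def[symmetric] ribbon(2,3) gam'_def[symmetric] del'_def[symmetric]
    by blast
qed

end
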